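(* Consider a hyperfractal with $n$ nodes and $d_F>2$, with radio range $R_n=1/\sqrt{n}$. Let $\epsilon>0$ and $H(n)=\left\lceil\frac{\log(n^{1/2-\epsilon}p/2)}{\log(2/q)}\right\rceil$. Then the probability that a street of level $H(n)$ has at least one inter-node gap larger than $R_n$ is at most $n e^{-(q/2)n^{\epsilon}}$.
   Context: Hyperfractal model: the map is the unit square $[0,1]^2$. For $l\ge 0$ let $\mathcal{X}_l=\{(b2^{-(l+1)},y): b=1,3,\dots,2^{l+1}-1,\ y\in[0,1]\}\cup\{(x,b2^{-(l+1)}): b=1,3,\dots,2^{l+1}-1,\ x\in[0,1]\}$; each such segment is a street of level $l$. Fix $p\in(0,1)$, $q=1-p$; $d_F=\log(4/q)/\log 2$. The $n$ mobile nodes form a Poisson point process on $\bigcup_l\mathcal{X}_l$ with total mean $n$ and one-dimensional intensity $\lambda_l=n(p/2)(q/2)^l$ on $\mathcal{X}_l$. An inter-node gap on a street is the distance between a node and the next node along that street. *)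

theory Defs
  imports "HOL-Probability.Probability"
begin

text \<open>A street is identified with the unit segment [0,1] (its arclength
parametrisation).  A homogeneous Poisson point process of (one-dimensional)
intensity lam on [0,1] is realised in the standard way: the number of points
is Poisson(lam) distributed, and given that there are k points they are
k i.i.d. uniform points on [0,1].  poisson_pp_prob lam E is the probability
that the random point set satisfies the event E.\<close>

definition unif01 :: "real measure" where
  "unif01 = uniform_measure lborel {0..1}"

definition poisson_pp_prob :: "real \<Rightarrow> (real set \<Rightarrow> bool) \<Rightarrow> real" where
  "poisson_pp_prob lam E =
     (\<Sum>k. exp (- lam) * lam ^ k / fact k *
        measure (PiM {..<k} (\<lambda>_. unif01))
          {x \<in> space (PiM {..<k} (\<lambda>_. unif01)). E (x ` {..<k})})"

definition hf_intensity :: "nat \<Rightarrow> real \<Rightarrow> nat \<Rightarrow> real" where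
  "hf_intensity n p l = real n * (p / 2) * ((1 - p) / 2) ^ l"

definition hf_dim :: "real \<Rightarrow> real" where
  "hf_dim p = log 2 (4 / (1 - p))"

definition has_gap_larger :: "real \<Rightarrow> real set \<Rightarrow> bool" where
  "has_gap_larger R S \<longleftrightarrow>
     (\<exists>x\<in>S. \<exists>y\<in>S. x < y \<and> (\<forall>z\<in>S. \<not> (x < z \<and> z < y)) \<and> y - x > R)"

definition H_level :: "nat \<Rightarrow> real \<Rightarrow> real \<Rightarrow> int" where
  "H_level n p \<epsilon> = \<lceil>ln (real n powr (1/2 - \<epsilon>) * p / 2) / ln (2 / (1 - p))\<rceil>"

end

theory Submission
  imports Defs
begin

text \<open>Cut the interval [0, 1 - R] into m cells of length \<delta> = (1 - R)/m.  If k uniform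
points on [0,1] have a gap longer than R, then its left end lies in some cell
[a\<delta>, (a+1)\<delta>) and no other point lies in [(a+1)\<delta>, a\<delta> + R].  A union bound over the
k m choices gives probability at most k (1 - R)(1 - R + \<delta>)^(k-1), and mixing over the
Poisson number of points turns this into \<lambda>(1 - R) e^(\<lambda>\<delta>) e^(-\<lambda>R) \<le> 2\<lambda> e^(-\<lambda>R) once
\<lambda>\<delta> \<le> ln 2.  At level H(n) the intensity satisfies \<lambda> \<le> n/2 and \<lambda>R_n \<ge> (q/2) n^\<epsilon>.\<close>

lemma prob_space_unif01: "prob_space unif01"
  unfolding unif01_def by (rule prob_space_uniform_measure) auto

lemma sets_unif01 [simp]: "sets unif01 = sets borel"
  unfolding unif01_def by simp

lemma measure_unif01: "A \<in> sets borel \<Longrightarrow> measure unif01 A = measure lborel ({0..1} \<inter> A)"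
  unfolding unif01_def by (subst measure_uniform_measure) auto

lemma measure_unif01_subset: "A \<in> sets borel \<Longrightarrow> A \<subseteq> {0..1} \<Longrightarrow> measure unif01 A = measure lborel A"
  by (simp add: measure_unif01 Int_absorb1)

lemma measure_PiM_unif01_PiE:
  assumes "finite I" "\<And>i. i \<in> I \<Longrightarrow> A i \<in> sets borel"
  shows "measure (PiM I (\<lambda>_. unif01)) (PiE I A) = (\<Prod>i\<in>I. measure unif01 (A i))"
proof -
  interpret product_prob_space "\<lambda>_. unif01" I
    by (simp add: product_prob_space_def product_prob_space_axioms_def product_sigma_finite_def
        prob_space_unif01 prob_space_imp_sigma_finite)
  have "emeasure (PiM I (\<lambda>_. unif01)) (PiE I A) = (\<Prod>i\<in>I. emeasure unif01 (A i))"
    using assms by (intro emeasure_PiM) auto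
  also have "\<dots> = ennreal (\<Prod>i\<in>I. measure unif01 (A i))"
    by (simp add: M.emeasure_eq_measure prod_ennreal)
  finally show ?thesis
    by (simp add: P.emeasure_eq_measure prod_nonneg)
qed

definition uniform_sample_prob :: "nat \<Rightarrow> (real set \<Rightarrow> bool) \<Rightarrow> real" where
  "uniform_sample_prob k E = measure (PiM {..<k} (\<lambda>_. unif01))
     {x \<in> space (PiM {..<k} (\<lambda>_. unif01)). E (x ` {..<k})}"

lemma poisson_pp_prob_eq_suminf:
  "poisson_pp_prob lam E = (\<Sum>k. exp (- lam) * lam ^ k / fact k * uniform_sample_prob k E)"
  unfolding poisson_pp_prob_def uniform_sample_prob_def ..

lemma has_gap_larger_imp_cell:
  fixes x :: "nat \<Rightarrow> real" and R \<delta> :: real and m :: nat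
  assumes in01: "\<And>l. l < k \<Longrightarrow> x l \<in> {0..1}" and gap: "has_gap_larger R (x ` {..<k})"
    and m: "m > 0" and \<delta>: "\<delta> = (1 - R) / m"
  shows "\<exists>i<k. \<exists>a<m. x i \<in> {real a * \<delta>..<(real a + 1) * \<delta>} \<and>
           (\<forall>l<k. l \<noteq> i \<longrightarrow> x l \<notin> {(real a + 1) * \<delta>..real a * \<delta> + R})"
proof -
  from gap obtain i j where ij: "i < k" "j < k" "x i < x j" "x j - x i > R"
    and next_node: "\<forall>l<k. \<not> (x i < x l \<and> x l < x j)"
    unfolding has_gap_larger_def by auto
  have xi: "0 \<le> x i" "x i < 1 - R" using in01 ij by force+
  then have \<delta>_pos: "\<delta> > 0" using \<delta> m by simp
  define a where "a = nat \<lfloor>x i / \<delta>\<rfloor>"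
  have a_eq: "real a = of_int \<lfloor>x i / \<delta>\<rfloor>" unfolding a_def using xi \<delta>_pos by simp
  have cell: "real a * \<delta> \<le> x i" "x i < (real a + 1) * \<delta>"
    using a_eq floor_divide_lower[OF \<delta>_pos, of "x i"] floor_divide_upper[OF \<delta>_pos, of "x i"]
    by (simp_all add: algebra_simps)
  have "real a * \<delta> < real m * \<delta>" using cell xi \<delta> m by simp
  then have "a < m" using \<delta>_pos by simp
  moreover have "\<forall>l<k. l \<noteq> i \<longrightarrow> x l \<notin> {(real a + 1) * \<delta>..real a * \<delta> + R}"
    using next_node cell ij(4) by force
  ultimately show ?thesis using ij(1) cell by auto
qed

definition gap_cell :: "nat \<Rightarrow> real \<Rightarrow> real \<Rightarrow> nat \<Rightarrow> nat \<Rightarrow> (nat \<Rightarrow> real) set" where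
  "gap_cell k \<delta> R i a = PiE {..<k} (\<lambda>l. if l = i then {real a * \<delta>..<(real a + 1) * \<delta>}
                                       else - {(real a + 1) * \<delta>..real a * \<delta> + R})"

lemma measure_gap_cell:
  fixes R \<delta> :: real and m :: nat
  assumes "i < k" "a < m" "m * \<delta> = 1 - R" "0 \<le> \<delta>" "\<delta> \<le> R"
  shows "measure (PiM {..<k} (\<lambda>_. unif01)) (gap_cell k \<delta> R i a) = \<delta> * (1 - R + \<delta>) ^ (k - 1)"
proof -
  define A where "A = {real a * \<delta>..<(real a + 1) * \<delta>}"
  define I where "I = {(real a + 1) * \<delta>..real a * \<delta> + R}"
  have "(real a + 1) * \<delta> \<le> m * \<delta>"
    using assms by (intro mult_right_mono) auto
  then have bounds: "\<delta> + \<delta> * a \<le> 1 - R" "0 \<le> \<delta> * a"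
    using assms by (simp_all add: algebra_simps)
  have "A \<subseteq> {0..1}"
  proof
    fix t assume "t \<in> A"
    then have "\<delta> * a \<le> t" "t \<le> \<delta> + \<delta> * a" by (simp_all add: A_def algebra_simps)
    then show "t \<in> {0..1}" using bounds assms(4,5) by (simp only: atLeastAtMost_iff) linarith
  qed
  then have "measure unif01 A = \<delta>"
    using assms by (simp add: measure_unif01_subset A_def algebra_simps)
  moreover have "measure unif01 (- I) = 1 - R + \<delta>"
  proof -
    have "I \<subseteq> {0..1}" using bounds assms by (auto simp: I_def algebra_simps)
    then have "measure unif01 (- I) = measure lborel {0..1::real} - measure lborel I"
      by (simp add: measure_unif01 Diff_eq[symmetric] measure_Diff I_def)
    then show ?thesis using assms by (simp add: I_def algebra_simps)
  qed
  moreover have "measure (PiM {..<k} (\<lambda>_. unif01)) (gap_cell k \<delta> R i a)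
      = measure unif01 A * measure unif01 (- I) ^ (k - 1)"
    using assms(1) by (simp add: gap_cell_def measure_PiM_unif01_PiE prod.remove[of "{..<k}" i] A_def I_def)
  ultimately show ?thesis by simp
qed

lemma uniform_sample_prob_gap_le:
  fixes R \<delta> :: real and m :: nat
  assumes "0 < R" "R \<le> 1" "m > 0" "\<delta> = (1 - R) / m" "\<delta> \<le> R"
  shows "uniform_sample_prob k (has_gap_larger R) \<le> k * (1 - R) * (1 - R + \<delta>) ^ (k - 1)"
proof -
  define M where "M = PiM {..<k} (\<lambda>_. unif01)"
  interpret P: prob_space M unfolding M_def by (intro prob_space_PiM prob_space_unif01)
  define outside where "outside j = PiE {..<k} (\<lambda>l. if l = j then - {0..1::real} else UNIV)" for j
  define cells where "cells = {..<k} \<times> {..<m}"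
  have m\<delta>: "m * \<delta> = 1 - R" "0 \<le> \<delta>" using assms by simp_all
  have sets: "outside j \<in> sets M" "gap_cell k \<delta> R i a \<in> sets M" for i j a
    unfolding outside_def gap_cell_def M_def by (auto intro!: sets_PiM_I_finite)
  have "{x \<in> space M. has_gap_larger R (x ` {..<k})}
        \<subseteq> (\<Union>j<k. outside j) \<union> (\<Union>(i, a)\<in>cells. gap_cell k \<delta> R i a)"
  proof
    fix x assume "x \<in> {x \<in> space M. has_gap_larger R (x ` {..<k})}"
    then have x_PiE: "x \<in> PiE {..<k} (\<lambda>_. UNIV)" and gap: "has_gap_larger R (x ` {..<k})"
      unfolding M_def by (simp_all add: space_PiM unif01_def)
    show "x \<in> (\<Union>j<k. outside j) \<union> (\<Union>(i, a)\<in>cells. gap_cell k \<delta> R i a)"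
    proof (cases "\<forall>l<k. x l \<in> {0..1}")
      case True
      obtain i a where "i < k" "a < m" "x i \<in> {real a * \<delta>..<(real a + 1) * \<delta>}"
        "\<forall>l<k. l \<noteq> i \<longrightarrow> x l \<notin> {(real a + 1) * \<delta>..real a * \<delta> + R}"
        using has_gap_larger_imp_cell[OF _ gap assms(3,4)] True by blast
      then have "(i, a) \<in> cells" "x \<in> gap_cell k \<delta> R i a"
        using x_PiE by (auto simp: cells_def gap_cell_def PiE_iff)
      then show ?thesis by blast
    next
      case False
      then obtain l where "l < k" "x l \<notin> {0..1}" by auto
      then show ?thesis using x_PiE by (auto simp: outside_def PiE_iff)
    qed
  qed
  moreover have union_sets: "(\<Union>j<k. outside j) \<in> sets M" "(\<Union>(i, a)\<in>cells. gap_cell k \<delta> R i a) \<in> sets M"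
    using sets unfolding cells_def by (auto intro!: sets.finite_UN simp: case_prod_unfold)
  ultimately have "uniform_sample_prob k (has_gap_larger R)
      \<le> measure M ((\<Union>j<k. outside j) \<union> (\<Union>(i, a)\<in>cells. gap_cell k \<delta> R i a))"
    unfolding uniform_sample_prob_def M_def[symmetric] by (intro P.finite_measure_mono) auto
  also have "\<dots> \<le> measure M (\<Union>j<k. outside j) + measure M (\<Union>(i, a)\<in>cells. gap_cell k \<delta> R i a)"
    by (rule measure_subadditive) (simp_all add: union_sets P.emeasure_eq_measure)
  also have "\<dots> \<le> (\<Sum>j<k. measure M (outside j)) + (\<Sum>(i, a)\<in>cells. measure M (gap_cell k \<delta> R i a))"
  proof (rule add_mono)
    show "measure M (\<Union>j<k. outside j) \<le> (\<Sum>j<k. measure M (outside j))"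
      using sets by (intro P.finite_measure_subadditive_finite) auto
    show "measure M (\<Union>(i, a)\<in>cells. gap_cell k \<delta> R i a) \<le> (\<Sum>(i, a)\<in>cells. measure M (gap_cell k \<delta> R i a))"
      using P.finite_measure_subadditive_finite[of cells "\<lambda>(i, a). gap_cell k \<delta> R i a"] sets
      by (simp add: cells_def case_prod_unfold image_subset_iff)
  qed
  also have "(\<Sum>j<k. measure M (outside j)) = 0"
    by (intro sum.neutral ballI prod_zero)
      (auto simp: M_def outside_def measure_PiM_unif01_PiE measure_unif01 intro!: bexI)
  also have "(\<Sum>(i, a)\<in>cells. measure M (gap_cell k \<delta> R i a)) = (\<Sum>_\<in>cells. \<delta> * (1 - R + \<delta>) ^ (k - 1))"
    unfolding M_def using m\<delta> assms(5) by (intro sum.cong) (auto simp: cells_def measure_gap_cell)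
  also have "\<dots> = k * (1 - R) * (1 - R + \<delta>) ^ (k - 1)"
    using m\<delta> by (simp add: cells_def card_cartesian_product)
  finally show ?thesis by simp
qed

lemma poisson_pp_prob_le_of_sample_prob_le:
  fixes lam c z :: real
  assumes lam: "lam \<ge> 0" and sample: "\<And>k. uniform_sample_prob k E \<le> k * c * z ^ (k - 1)"
  shows "poisson_pp_prob lam E \<le> lam * c * exp (lam * (z - 1))"
proof -
  define t where "t k = exp (- lam) * lam ^ k / fact k * uniform_sample_prob k E" for k
  define g where "g k = exp (- lam) * lam ^ k / fact k * (k * c * z ^ (k - 1))" for k
  have t_nonneg: "t k \<ge> 0" for k
    using lam by (simp add: t_def uniform_sample_prob_def)
  have t_le_g: "t k \<le> g k" for k
    unfolding t_def g_def using lam by (intro mult_left_mono sample) auto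
  have "(\<lambda>j. exp (- lam) * lam * c * ((lam * z) ^ j /\<^sub>R fact j)) sums (exp (- lam) * lam * c * exp (lam * z))"
    by (intro sums_mult exp_converges)
  moreover have "exp (- lam) * lam * c * ((lam * z) ^ j /\<^sub>R fact j) = g (Suc j)" for j
  proof -
    have "g (Suc j) = exp (- lam) * lam * c * (lam ^ j * z ^ j) * (real (Suc j) / fact (Suc j))"
      by (simp add: g_def field_simps del: fact_Suc of_nat_Suc)
    also have "real (Suc j) / fact (Suc j) = 1 / fact j"
      by simp
    finally show ?thesis by (simp add: power_mult_distrib divide_inverse_commute)
  qed
  ultimately have "(\<lambda>j. g (Suc j)) sums (exp (- lam) * lam * c * exp (lam * z))"
    by (simp only:)
  then have g_sums: "g sums (exp (- lam) * lam * c * exp (lam * z))"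
    by (subst (asm) sums_Suc_iff) (simp add: g_def)
  have "summable t"
    by (rule summable_comparison_test'[OF sums_summable[OF g_sums], of 0]) (use t_nonneg t_le_g in auto)
  then have "poisson_pp_prob lam E \<le> suminf g"
    unfolding poisson_pp_prob_eq_suminf t_def[symmetric]
    by (rule suminf_le[OF t_le_g _ sums_summable[OF g_sums]])
  also have "suminf g = lam * c * (exp (- lam) * exp (lam * z))"
    using sums_unique[OF g_sums] by (simp add: ac_simps)
  also have "exp (- lam) * exp (lam * z) = exp (lam * (z - 1))"
    by (simp add: mult_exp_exp algebra_simps)
  finally show ?thesis .
qed

lemma poisson_pp_prob_gap_le:
  fixes lam R :: real
  assumes R: "0 < R" "R \<le> 1" and lam: "lam \<ge> 0"
  shows "poisson_pp_prob lam (has_gap_larger R) \<le> 2 * lam * exp (- (lam * R))"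
proof -
  \<comment> \<open>Enough cells that \<delta> \<le> R and \<lambda>\<delta> \<le> ln 2, so the factor e^(\<lambda>\<delta>) costs at most 2.\<close>
  define m where "m = nat \<lceil>(1 - R) / R + lam * (1 - R) / ln 2\<rceil> + 1"
  define \<delta> where "\<delta> = (1 - R) / m"
  have "(1 - R) / R + lam * (1 - R) / ln 2 \<le> m"
    unfolding m_def by linarith
  moreover have "0 \<le> (1 - R) / R" "0 \<le> lam * (1 - R) / ln 2"
    using R lam by auto
  ultimately have m: "m > 0" "(1 - R) / R \<le> m" "lam * (1 - R) / ln 2 \<le> m"
    unfolding m_def by linarith+
  have \<delta>_le: "\<delta> \<le> R" "lam * \<delta> \<le> ln 2"
    using m R unfolding \<delta>_def by (simp_all add: field_simps)
  have exp_\<delta>: "exp (lam * \<delta>) \<le> 2"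
    using \<delta>_le(2) by (metis exp_ln exp_le_cancel_iff zero_less_numeral)
  have "poisson_pp_prob lam (has_gap_larger R) \<le> lam * (1 - R) * exp (lam * ((1 - R + \<delta>) - 1))"
    using uniform_sample_prob_gap_le[OF R m(1) \<delta>_def \<delta>_le(1)] lam
    by (intro poisson_pp_prob_le_of_sample_prob_le) (simp_all add: mult_ac)
  also have "\<dots> = lam * (1 - R) * exp (lam * \<delta>) * exp (- (lam * R))"
    by (simp add: mult_exp_exp algebra_simps)
  also have "\<dots> \<le> lam * 1 * 2 * exp (- (lam * R))"
    using R lam exp_\<delta> by (intro mult_right_mono mult_mono) auto
  finally show ?thesis by simp
qed

lemma hf_intensity_le_half:
  assumes "0 \<le> p" "p \<le> 1"
  shows "hf_intensity n p l \<le> real n / 2"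
proof -
  have "p * ((1 - p) / 2) ^ l \<le> 1 * 1"
    using assms by (intro mult_mono power_le_one) auto
  from mult_left_mono[OF this, of "real n / 2"] show ?thesis
    by (simp add: hf_intensity_def mult_ac)
qed

lemma power_nat_ceiling_log_le:
  fixes b N :: real
  assumes "1 < b" "0 < N" "0 \<le> \<lceil>log b N\<rceil>"
  shows "b ^ nat \<lceil>log b N\<rceil> \<le> b * N"
proof -
  have "b ^ nat \<lceil>log b N\<rceil> = b powr of_int \<lceil>log b N\<rceil>"
    using assms by (simp add: powr_realpow[symmetric])
  also have "\<dots> \<le> b powr (log b N + 1)"
    using assms by (intro powr_mono) linarith+
  also have "\<dots> = b * N"
    using assms by (simp add: powr_add)
  finally show ?thesis .
qed

lemma hf_intensity_H_level_times_radius_ge: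
  assumes p: "0 < p" "p < 1" and n: "n \<ge> 1" and H: "H_level n p \<epsilon> \<ge> 0"
  shows "((1 - p) / 2) * real n powr \<epsilon>
           \<le> hf_intensity n p (nat (H_level n p \<epsilon>)) * (1 / sqrt (real n))"
proof -
  define q where "q = 1 - p"
  define N where "N = real n powr (1/2 - \<epsilon>) * p / 2"
  define h where "h = nat (H_level n p \<epsilon>)"
  have q: "0 < q" "q < 1" and N: "N > 0" and n_pos: "real n > 0"
    using p n by (auto simp: q_def N_def)
  have H_eq: "H_level n p \<epsilon> = \<lceil>log (2 / q) N\<rceil>"
    by (simp add: H_level_def log_def N_def q_def)
  have pow_h: "(2 / q) ^ h \<le> (2 / q) * N"
    unfolding h_def H_eq using q N H H_eq by (intro power_nat_ceiling_log_le) auto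
  have "(q / 2) * real n powr \<epsilon> = (q / 2) * (real n powr (1/2) / real n powr (1/2 - \<epsilon>))"
    using n_pos by (simp add: powr_diff[symmetric])
  also have "\<dots> = sqrt (real n) * (p / 2) / ((2 / q) * N)"
    using n_pos p q by (simp add: N_def powr_half_sqrt field_simps)
  also have "\<dots> \<le> sqrt (real n) * (p / 2) / (2 / q) ^ h"
    using pow_h p q N n_pos by (intro divide_left_mono) auto
  also have "\<dots> = hf_intensity n p h * (1 / sqrt (real n))"
    using n_pos by (simp add: hf_intensity_def q_def power_divide field_simps real_div_sqrt)
  finally show ?thesis unfolding q_def h_def .
qed

theorem lemma6:
  fixes n :: nat and p \<epsilon> :: real
  assumes "0 < p" "p < 1" "hf_dim p > 2" "n \<ge> 1" "\<epsilon> > 0"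
    and "H_level n p \<epsilon> \<ge> 0"
  shows "poisson_pp_prob (hf_intensity n p (nat (H_level n p \<epsilon>)))
            (has_gap_larger (1 / sqrt (real n)))
         \<le> real n * exp (- ((1 - p) / 2) * real n powr \<epsilon>)"
proof -
  define lam where "lam = hf_intensity n p (nat (H_level n p \<epsilon>))"
  define R where "R = 1 / sqrt (real n)"
  have R: "0 < R" "R \<le> 1"
    using assms(4) by (simp_all add: R_def)
  have lam: "0 \<le> lam" "lam \<le> real n / 2"
    using assms(1,2) hf_intensity_le_half[of p n] by (simp_all add: lam_def hf_intensity_def)
  have lam_R: "((1 - p) / 2) * real n powr \<epsilon> \<le> lam * R"
    unfolding lam_def R_def using assms by (intro hf_intensity_H_level_times_radius_ge) auto
  have "poisson_pp_prob lam (has_gap_larger R) \<le> 2 * lam * exp (- (lam * R))"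
    by (rule poisson_pp_prob_gap_le[OF R lam(1)])
  also have "\<dots> \<le> 2 * (real n / 2) * exp (- ((1 - p) / 2 * real n powr \<epsilon>))"
    using lam lam_R by (intro mult_mono) auto
  finally show ?thesis by (simp add: lam_def R_def)
qed

end
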